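(* Let $F$ be a simple signed graph with at least two edges that has a signed perfect elimination ordering. Then the skeleton (graph of vertices and edges) of the signed graphic zonotope of $F$ has a Hamiltonian cycle.
   Context: A signed graph is a simple graph $F=([n],E)$ together with a partition $E=E^+\cup E^-$ into positive and negative edges. Its signed graphic arrangement $\mathcal{H}(F)$ in $\mathbb{R}^n$ consists of the hyperplanes with normal vectors $e_i-e_j$ for $\{i,j\}\in E^+$ and $e_i+e_j$ for $\{i,j\}\in E^-$ ($e_i$ the standard basis vectors). The signed graphic zonotope of $F$ is the Minkowski sum of the line segments $[-v,v]$ over the normal vectors $v$ of the hyperplanes of $\mathcal{H}(F)$. A vertex $v$ of $F$ is signed simplicial if for any two distinct neighbors $x,y$ of $v$: if $\{v,x\},\{v,y\}$ are both in $E^+$ or both in $E^-$, then $\{x,y\}\in E^+$; and if $\{v,x\}\in E^+$ and $\{v,y\}\in E^-$, then $\{x,y\}\in E^-$. An ordering $v_1,\dots,v_n$ of the vertices is a signed perfect elimination ordering if for each $i$, $v_i$ is signed simplicial in the signed graph obtained from $F$ by deleting $v_1,\dots,v_{i-1}$. *)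

theory Defs
  imports "HOL-Analysis.Analysis"
begin

text \<open>A signed graph on the vertex set UNIV of a finite type 'n (playing the role of [n]),
  given by its sets of positive and negative edges (edges are 2-element vertex sets).\<close>

definition signed_graph :: "'n::finite set set \<Rightarrow> 'n set set \<Rightarrow> bool" where
  "signed_graph Ep En \<longleftrightarrow>
     (\<forall>e \<in> Ep \<union> En. \<exists>i j. i \<noteq> j \<and> e = {i, j}) \<and> Ep \<inter> En = {}"

definition signed_simplicial_in :: "'n set set \<Rightarrow> 'n set set \<Rightarrow> 'n set \<Rightarrow> 'n \<Rightarrow> bool" where
  "signed_simplicial_in Ep En S v \<longleftrightarrow>
     (\<forall>x \<in> S. \<forall>y \<in> S. x \<noteq> v \<longrightarrow> y \<noteq> v \<longrightarrow> x \<noteq> y \<longrightarrow>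
        ((({v,x} \<in> Ep \<and> {v,y} \<in> Ep) \<or> ({v,x} \<in> En \<and> {v,y} \<in> En)) \<longrightarrow> {x,y} \<in> Ep) \<and>
        (({v,x} \<in> Ep \<and> {v,y} \<in> En) \<longrightarrow> {x,y} \<in> En))"

definition signed_peo :: "'n::finite set set \<Rightarrow> 'n set set \<Rightarrow> 'n list \<Rightarrow> bool" where
  "signed_peo Ep En vs \<longleftrightarrow> distinct vs \<and> set vs = UNIV \<and>
     (\<forall>i < length vs. signed_simplicial_in Ep En (set (drop i vs)) (vs ! i))"

text \<open>The segment [-v,v] for the normal vector v of the hyperplane of an edge
  (independent of the orientation of the edge).\<close>
definition pos_segment :: "'n::finite set \<Rightarrow> (real ^ 'n) set" where
  "pos_segment e = {x. \<exists>i j t. e = {i, j} \<and> i \<noteq> j \<and> \<bar>t\<bar> \<le> 1 \<and>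
                          x = t *\<^sub>R (axis i 1 - axis j 1)}"

definition neg_segment :: "'n::finite set \<Rightarrow> (real ^ 'n) set" where
  "neg_segment e = {x. \<exists>i j t. e = {i, j} \<and> i \<noteq> j \<and> \<bar>t\<bar> \<le> 1 \<and>
                          x = t *\<^sub>R (axis i 1 + axis j 1)}"

definition edge_segment :: "'n::finite set set \<Rightarrow> 'n set \<Rightarrow> (real ^ 'n) set" where
  "edge_segment Ep e = (if e \<in> Ep then pos_segment e else neg_segment e)"

definition signed_graphic_zonotope :: "'n::finite set set \<Rightarrow> 'n set set \<Rightarrow> (real ^ 'n) set" where
  "signed_graphic_zonotope Ep En =
     {\<Sum>e \<in> Ep \<union> En. f e | f. \<forall>e \<in> Ep \<union> En. f e \<in> edge_segment Ep e}"

definition skel_vertices :: "'a::euclidean_space set \<Rightarrow> 'a set" where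
  "skel_vertices P = {x. x extreme_point_of P}"

definition skel_adj :: "'a::euclidean_space set \<Rightarrow> 'a \<Rightarrow> 'a \<Rightarrow> bool" where
  "skel_adj P u v \<longleftrightarrow> u \<in> skel_vertices P \<and> v \<in> skel_vertices P \<and> u \<noteq> v \<and>
                       closed_segment u v face_of P"

definition hamiltonian_cycle :: "'a set \<Rightarrow> ('a \<Rightarrow> 'a \<Rightarrow> bool) \<Rightarrow> 'a list \<Rightarrow> bool" where
  "hamiltonian_cycle V adj cs \<longleftrightarrow> distinct cs \<and> set cs = V \<and> length cs \<ge> 3 \<and>
     (\<forall>i < length cs. adj (cs ! i) (cs ! ((i + 1) mod length cs)))"

end

theory Submission
  imports Defs
begin

text \<open>A generic direction \<open>c\<close> (orthogonal to no generator \<open>n e\<close>) is maximised on the zonotope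
  \<open>\<Sum>e. [-n e, n e]\<close> exactly at \<open>\<Sum>e. sgn (c \<bullet> n e) n e\<close>, so the vertices correspond to the
  regions of the arrangement of hyperplanes \<open>c \<bullet> n e = 0\<close>, and two vertices span an edge when
  their regions are separated by a single hyperplane.  A Hamiltonian cycle of the skeleton is
  therefore a cyclic listing of the regions in which consecutive regions are adjacent.

  Such a listing is built along the reversed elimination ordering.  Adding a signed simplicial
  vertex \<open>v\<close> adds the hyperplanes \<open>x\<^sub>v = \<plusminus>x\<^sub>u\<close> for its \<open>d\<close> neighbours \<open>u\<close>; by
  simpliciality the values \<open>\<plusminus>x\<^sub>u\<close> are totally ordered on each old region, which is therefore
  cut into a chain of \<open>d + 1\<close> new regions.  Running through these chains alternately up and
  down along an old cycle of even length yields a new cycle of even length.\<close>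

section \<open>Zonotopes and their skeleton\<close>

definition zonotope :: "'e set \<Rightarrow> ('e \<Rightarrow> 'a::euclidean_space) \<Rightarrow> 'a set" where
  "zonotope E n = {\<Sum>e\<in>E. t e *\<^sub>R n e | t. \<forall>e\<in>E. \<bar>t e\<bar> \<le> 1}"

definition generic :: "'e set \<Rightarrow> ('e \<Rightarrow> 'a::euclidean_space) \<Rightarrow> 'a \<Rightarrow> bool" where
  "generic E n c \<longleftrightarrow> (\<forall>e\<in>E. c \<bullet> n e \<noteq> 0)"

definition zonotope_vertex :: "'e set \<Rightarrow> ('e \<Rightarrow> 'a::euclidean_space) \<Rightarrow> 'a \<Rightarrow> 'a" where
  "zonotope_vertex E n c = (\<Sum>e\<in>E. sgn (c \<bullet> n e) *\<^sub>R n e)"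

definition same_signs :: "'e set \<Rightarrow> ('e \<Rightarrow> 'a::euclidean_space) \<Rightarrow> 'a \<Rightarrow> 'a \<Rightarrow> bool" where
  "same_signs E n a c \<longleftrightarrow> (\<forall>e\<in>E. sgn (a \<bullet> n e) = sgn (c \<bullet> n e))"

definition adjacent_signs :: "'e set \<Rightarrow> ('e \<Rightarrow> 'a::euclidean_space) \<Rightarrow> 'a \<Rightarrow> 'a \<Rightarrow> bool" where
  "adjacent_signs E n a c \<longleftrightarrow>
     (\<exists>e0\<in>E. sgn (a \<bullet> n e0) \<noteq> sgn (c \<bullet> n e0) \<and> same_signs (E - {e0}) n a c)"

lemma adjacent_signs_sym: "adjacent_signs E n a c \<Longrightarrow> adjacent_signs E n c a"
  unfolding adjacent_signs_def same_signs_def by metis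

lemma generic_same_signs: "generic E n c \<Longrightarrow> same_signs E n a c \<Longrightarrow> generic E n a"
  unfolding generic_def same_signs_def by (metis sgn_0_0)

lemma mult_le_abs_if_abs_le_one:
  fixes t x :: real
  assumes "\<bar>t\<bar> \<le> 1"
  shows "t * x \<le> \<bar>x\<bar>"
proof -
  have "t * x \<le> \<bar>t\<bar> * \<bar>x\<bar>" by (metis abs_ge_self abs_mult)
  also have "\<dots> \<le> \<bar>x\<bar>" using assms by (simp add: mult_left_le_one_le)
  finally show ?thesis .
qed

lemma eq_sgn_if_mult_eq_abs:
  fixes t x :: real
  assumes "x \<noteq> 0" "t * x = \<bar>x\<bar>"
  shows "t = sgn x"
proof -
  have "t * x = sgn x * x" using assms(2) by (simp add: abs_sgn mult.commute)
  then show ?thesis using assms(1) by simp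
qed

lemma inner_zonotope_le:
  assumes "y \<in> zonotope E n"
  shows "c \<bullet> y \<le> (\<Sum>e\<in>E. \<bar>c \<bullet> n e\<bar>)"
proof -
  obtain t where y: "y = (\<Sum>e\<in>E. t e *\<^sub>R n e)" and t: "\<forall>e\<in>E. \<bar>t e\<bar> \<le> 1"
    using assms unfolding zonotope_def by blast
  have "c \<bullet> y = (\<Sum>e\<in>E. t e * (c \<bullet> n e))" by (simp add: y inner_sum_right)
  also have "\<dots> \<le> (\<Sum>e\<in>E. \<bar>c \<bullet> n e\<bar>)"
    using t by (intro sum_mono mult_le_abs_if_abs_le_one) auto
  finally show ?thesis .
qed

lemma zonotope_vertex_in_zonotope: "zonotope_vertex E n c \<in> zonotope E n"
  unfolding zonotope_def zonotope_vertex_def by (auto simp: sgn_if)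

lemma inner_zonotope_vertex: "c \<bullet> zonotope_vertex E n c = (\<Sum>e\<in>E. \<bar>c \<bullet> n e\<bar>)"
  unfolding zonotope_vertex_def inner_sum_right
  by (simp add: abs_sgn mult.commute)

lemma zonotope_maximizer_coefficient:
  assumes "finite E" and t: "\<forall>e\<in>E. \<bar>t e\<bar> \<le> 1"
    and max: "c \<bullet> (\<Sum>e\<in>E. t e *\<^sub>R n e) = (\<Sum>e\<in>E. \<bar>c \<bullet> n e\<bar>)"
    and "e \<in> E" and "c \<bullet> n e \<noteq> 0"
  shows "t e = sgn (c \<bullet> n e)"
proof (rule ccontr)
  assume "t e \<noteq> sgn (c \<bullet> n e)"
  then have "t e * (c \<bullet> n e) < \<bar>c \<bullet> n e\<bar>"
    using eq_sgn_if_mult_eq_abs[of "c \<bullet> n e" "t e"] mult_le_abs_if_abs_le_one[of "t e" "c \<bullet> n e"]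
      t \<open>e \<in> E\<close> \<open>c \<bullet> n e \<noteq> 0\<close> by fastforce
  then have "(\<Sum>e\<in>E. t e * (c \<bullet> n e)) < (\<Sum>e\<in>E. \<bar>c \<bullet> n e\<bar>)"
    using t \<open>finite E\<close> \<open>e \<in> E\<close>
    by (intro sum_strict_mono_ex1 ballI mult_le_abs_if_abs_le_one) auto
  with max show False by (simp add: inner_sum_right)
qed

lemma zonotope_maximizer_unique:
  assumes "finite E" "generic E n c" "y \<in> zonotope E n"
    and "c \<bullet> y = (\<Sum>e\<in>E. \<bar>c \<bullet> n e\<bar>)"
  shows "y = zonotope_vertex E n c"
proof -
  obtain t where y: "y = (\<Sum>e\<in>E. t e *\<^sub>R n e)" and t: "\<forall>e\<in>E. \<bar>t e\<bar> \<le> 1"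
    using assms(3) unfolding zonotope_def by blast
  have "t e = sgn (c \<bullet> n e)" if "e \<in> E" for e
    using zonotope_maximizer_coefficient[OF assms(1) t] assms(2,4) that unfolding y generic_def by blast
  then show ?thesis unfolding y zonotope_vertex_def by (intro sum.cong) auto
qed

lemma zonotope_vertex_extreme_point:
  assumes "finite E" "generic E n c"
  shows "zonotope_vertex E n c extreme_point_of zonotope E n"
proof (rule extreme_point_of_Int_supporting_hyperplane_le)
  show "zonotope E n \<inter> {x. c \<bullet> x = (\<Sum>e\<in>E. \<bar>c \<bullet> n e\<bar>)} = {zonotope_vertex E n c}"
    using zonotope_maximizer_unique[OF assms] zonotope_vertex_in_zonotope inner_zonotope_vertex
    by blast
qed (rule inner_zonotope_le)

lemma zonotope_vertex_cong: "same_signs E n a c \<Longrightarrow> zonotope_vertex E n a = zonotope_vertex E n c"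
  unfolding zonotope_vertex_def same_signs_def by (intro sum.cong) auto

lemma zonotope_vertex_eq_iff:
  assumes "finite E" "generic E n c"
  shows "zonotope_vertex E n c = zonotope_vertex E n c' \<longleftrightarrow> same_signs E n c c'"
proof
  assume eq: "zonotope_vertex E n c = zonotope_vertex E n c'"
  have "sgn (c' \<bullet> n e) = sgn (c \<bullet> n e)" if "e \<in> E" for e
  proof (rule zonotope_maximizer_coefficient[OF assms(1)])
    show "c \<bullet> (\<Sum>e\<in>E. sgn (c' \<bullet> n e) *\<^sub>R n e) = (\<Sum>e\<in>E. \<bar>c \<bullet> n e\<bar>)"
      using inner_zonotope_vertex[of c E n] eq unfolding zonotope_vertex_def by simp
  qed (use assms(2) that in \<open>auto simp: generic_def sgn_if\<close>)
  then show "same_signs E n c c'" unfolding same_signs_def by simp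
qed (rule zonotope_vertex_cong)

lemma convex_zonotope: "convex (zonotope E n)"
  unfolding convex_def
proof (intro allI impI ballI)
  fix x y :: 'a and u v :: real
  assume "x \<in> zonotope E n" "y \<in> zonotope E n" and uv: "0 \<le> u" "0 \<le> v" "u + v = 1"
  then obtain t s where x: "x = (\<Sum>e\<in>E. t e *\<^sub>R n e)" and t: "\<forall>e\<in>E. \<bar>t e\<bar> \<le> 1"
    and y: "y = (\<Sum>e\<in>E. s e *\<^sub>R n e)" and s: "\<forall>e\<in>E. \<bar>s e\<bar> \<le> 1"
    unfolding zonotope_def by blast
  have "u *\<^sub>R x + v *\<^sub>R y = (\<Sum>e\<in>E. (u * t e + v * s e) *\<^sub>R n e)"
    unfolding x y scaleR_sum_right sum.distrib[symmetric] by (simp add: scaleR_add_left)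
  moreover have "\<bar>u * t e + v * s e\<bar> \<le> 1" if "e \<in> E" for e
  proof -
    have "\<bar>u * t e + v * s e\<bar> \<le> u * \<bar>t e\<bar> + v * \<bar>s e\<bar>"
      using uv by (metis abs_mult abs_of_nonneg abs_triangle_ineq)
    also have "\<dots> \<le> u + v"
      using uv t s that by (intro add_mono mult_right_le_one_le) auto
    finally show ?thesis using uv by simp
  qed
  ultimately show "u *\<^sub>R x + v *\<^sub>R y \<in> zonotope E n"
    unfolding zonotope_def by (intro CollectI exI[of _ "\<lambda>e. u * t e + v * s e"]) blast
qed

lemma polytope_zonotope:
  fixes E :: "'e::finite set"
  shows "polytope (zonotope E n)"
proof -
  define L where "L = (\<lambda>t::real^'e. \<Sum>e\<in>E. (t $ e) *\<^sub>R n e)"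
  have "linear L"
    unfolding L_def by (rule linearI) (simp_all add: sum.distrib scaleR_add_left scaleR_sum_right)
  moreover have "zonotope E n = L ` cbox (-1) 1"
  proof
    show "zonotope E n \<subseteq> L ` cbox (-1) 1"
    proof
      fix x assume "x \<in> zonotope E n"
      then obtain t where x: "x = (\<Sum>e\<in>E. t e *\<^sub>R n e)" and t: "\<forall>e\<in>E. \<bar>t e\<bar> \<le> 1"
        unfolding zonotope_def by blast
      have "(\<chi> e. if e \<in> E then t e else 0) \<in> cbox (-1) 1"
        using t by (auto simp: mem_box_cart abs_le_iff)
      moreover have "L (\<chi> e. if e \<in> E then t e else 0) = x"
        unfolding L_def x by (intro sum.cong) auto
      ultimately show "x \<in> L ` cbox (-1) 1" by blast
    qed
    show "L ` cbox (-1) 1 \<subseteq> zonotope E n"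
      unfolding L_def zonotope_def by (auto simp: mem_box_cart abs_le_iff)
  qed
  ultimately show ?thesis using polytope_linear_image polytope_interval by metis
qed

lemma zonotope_vertex_remove:
  assumes "finite E" "e0 \<in> E"
  shows "zonotope_vertex E n c = zonotope_vertex (E - {e0}) n c + sgn (c \<bullet> n e0) *\<^sub>R n e0"
  unfolding zonotope_vertex_def using sum.remove[OF assms] by (simp add: add.commute)

lemma zonotope_remove:
  assumes "finite E" "e0 \<in> E"
  shows "zonotope E n = {y + s *\<^sub>R n e0 | y s. y \<in> zonotope (E - {e0}) n \<and> \<bar>s\<bar> \<le> 1}"
proof (intro equalityI subsetI)
  fix x assume "x \<in> zonotope E n"
  then obtain t where x: "x = (\<Sum>e\<in>E. t e *\<^sub>R n e)" and t: "\<forall>e\<in>E. \<bar>t e\<bar> \<le> 1"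
    unfolding zonotope_def by blast
  have "x = (\<Sum>e\<in>E - {e0}. t e *\<^sub>R n e) + t e0 *\<^sub>R n e0"
    unfolding x sum.remove[OF assms] by (simp add: add.commute)
  moreover have "(\<Sum>e\<in>E - {e0}. t e *\<^sub>R n e) \<in> zonotope (E - {e0}) n"
    using t unfolding zonotope_def by blast
  ultimately show "x \<in> {y + s *\<^sub>R n e0 | y s. y \<in> zonotope (E - {e0}) n \<and> \<bar>s\<bar> \<le> 1}"
    using t assms(2) by blast
next
  fix x assume "x \<in> {y + s *\<^sub>R n e0 | y s. y \<in> zonotope (E - {e0}) n \<and> \<bar>s\<bar> \<le> 1}"
  then obtain t s where x: "x = (\<Sum>e\<in>E - {e0}. t e *\<^sub>R n e) + s *\<^sub>R n e0"
    and t: "\<forall>e\<in>E - {e0}. \<bar>t e\<bar> \<le> 1" and s: "\<bar>s\<bar> \<le> 1"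
    unfolding zonotope_def by blast
  have "(\<Sum>e\<in>E - {e0}. (t(e0 := s)) e *\<^sub>R n e) = (\<Sum>e\<in>E - {e0}. t e *\<^sub>R n e)"
    by (rule sum.cong) auto
  then have "x = (\<Sum>e\<in>E. (t(e0 := s)) e *\<^sub>R n e)"
    unfolding x sum.remove[OF assms] by (simp add: add.commute)
  moreover have "\<forall>e\<in>E. \<bar>(t(e0 := s)) e\<bar> \<le> 1" using t s by simp
  ultimately show "x \<in> zonotope E n" unfolding zonotope_def by blast
qed

lemma extreme_point_of_zonotope:
  fixes E :: "'e::finite set" and n :: "'e \<Rightarrow> 'a::euclidean_space"
  assumes nonzero: "\<forall>e\<in>E. n e \<noteq> 0" and "x extreme_point_of zonotope E n"
  obtains c where "generic E n c" "x = zonotope_vertex E n c"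
proof -
  have "{x} face_of zonotope E n"
    using assms(2) by (simp add: face_of_singleton)
  then have "{x} exposed_face_of zonotope E n"
    using exposed_face_of_polyhedron[OF polytope_imp_polyhedron[OF polytope_zonotope]] by blast
  then obtain c b where le: "zonotope E n \<subseteq> {y. c \<bullet> y \<le> b}"
    and face: "{x} = zonotope E n \<inter> {y. c \<bullet> y = b}"
    unfolding exposed_face_of_def by blast
  then have x: "x \<in> zonotope E n" "c \<bullet> x = b" by auto
  have "generic E n c"
    unfolding generic_def
  proof (intro ballI notI)
    fix e0 assume e0: "e0 \<in> E" and orth: "c \<bullet> n e0 = 0"
    note decompose = zonotope_remove[OF finite e0, of n]
    obtain y s where y: "y \<in> zonotope (E - {e0}) n" and "x = y + s *\<^sub>R n e0"
      using x(1) unfolding decompose by blast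
    \<comment> \<open>moving along the generator \<open>n e0\<close> stays inside the face \<open>{x}\<close>\<close>
    have "y + r *\<^sub>R n e0 = x" if "\<bar>r\<bar> \<le> 1" for r
    proof -
      have "y + r *\<^sub>R n e0 \<in> zonotope E n"
        using y that unfolding decompose by blast
      moreover have "c \<bullet> (y + r *\<^sub>R n e0) = b"
        using x(2) orth \<open>x = y + s *\<^sub>R n e0\<close> by (simp add: inner_add_right)
      ultimately show ?thesis using face by blast
    qed
    from this[of 1] this[of 0] have "n e0 = 0" by simp
    with nonzero e0 show False by simp
  qed
  moreover have "c \<bullet> zonotope_vertex E n c \<le> b"
    using le zonotope_vertex_in_zonotope by blast
  then have "c \<bullet> x = (\<Sum>e\<in>E. \<bar>c \<bullet> n e\<bar>)"
    using inner_zonotope_vertex inner_zonotope_le[OF x(1)] x(2) by (metis order_antisym)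
  ultimately show ?thesis
    using that zonotope_maximizer_unique[OF _ _ x(1)] by simp
qed

lemma add_scaleR_in_closed_segment:
  assumes "\<bar>s\<bar> \<le> 1"
  shows "p + s *\<^sub>R x \<in> closed_segment (p - x) (p + x)"
proof -
  define u where "u = (1 + s) / 2"
  have "p + s *\<^sub>R x = (1 - u) *\<^sub>R (p - x) + u *\<^sub>R (p + x)" "0 \<le> u" "u \<le> 1"
    using assms unfolding u_def by (auto simp: algebra_simps scaleR_left_distrib[symmetric])
  then show ?thesis unfolding closed_segment_def by blast
qed

lemma zonotope_face_along_generator:
  assumes "finite E" "e0 \<in> E" "d \<bullet> n e0 = 0" "generic (E - {e0}) n d"
  defines "p \<equiv> zonotope_vertex (E - {e0}) n d"
  shows "closed_segment (p - n e0) (p + n e0) face_of zonotope E n"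
proof -
  have max_eq: "(\<Sum>e\<in>E. \<bar>d \<bullet> n e\<bar>) = (\<Sum>e\<in>E - {e0}. \<bar>d \<bullet> n e\<bar>)"
    using sum.remove[OF assms(1,2), of "\<lambda>e. \<bar>d \<bullet> n e\<bar>"] assms(3) by simp
  define F where "F = zonotope E n \<inter> {y. d \<bullet> y = (\<Sum>e\<in>E. \<bar>d \<bullet> n e\<bar>)}"
  have "F face_of zonotope E n"
    unfolding F_def by (rule face_of_Int_supporting_hyperplane_le[OF convex_zonotope inner_zonotope_le])
  moreover have "F = closed_segment (p - n e0) (p + n e0)"
  proof (intro equalityI subsetI)
    fix x assume "x \<in> F"
    then obtain y s where y: "y \<in> zonotope (E - {e0}) n" and s: "\<bar>s\<bar> \<le> 1"
      and x: "x = y + s *\<^sub>R n e0" and dx: "d \<bullet> x = (\<Sum>e\<in>E. \<bar>d \<bullet> n e\<bar>)"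
      unfolding F_def zonotope_remove[OF assms(1,2)] by blast
    have "d \<bullet> y = (\<Sum>e\<in>E - {e0}. \<bar>d \<bullet> n e\<bar>)"
      using dx assms(3) max_eq unfolding x by (simp add: inner_add_right)
    then have "y = p"
      unfolding p_def using zonotope_maximizer_unique assms(1,4) y by blast
    then show "x \<in> closed_segment (p - n e0) (p + n e0)"
      using add_scaleR_in_closed_segment[OF s] unfolding x by simp
  next
    have "p + r *\<^sub>R n e0 \<in> F" if "\<bar>r\<bar> \<le> 1" for r
    proof -
      have "p + r *\<^sub>R n e0 \<in> zonotope E n"
        unfolding zonotope_remove[OF assms(1,2)] p_def using that zonotope_vertex_in_zonotope by blast
      moreover have "d \<bullet> (p + r *\<^sub>R n e0) = (\<Sum>e\<in>E. \<bar>d \<bullet> n e\<bar>)"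
        using assms(3) max_eq inner_zonotope_vertex unfolding p_def by (simp add: inner_add_right)
      ultimately show ?thesis unfolding F_def by blast
    qed
    from this[of "-1"] this[of 1] have "p - n e0 \<in> F" "p + n e0 \<in> F" by simp_all
    moreover have "convex F"
      unfolding F_def by (intro convex_Int convex_zonotope convex_hyperplane)
    ultimately show "x \<in> F" if "x \<in> closed_segment (p - n e0) (p + n e0)" for x
      using that closed_segment_subset by blast
  qed
  ultimately show ?thesis by simp
qed

lemma sgn_convex_combination:
  fixes x y l :: real
  assumes "sgn x = sgn y" "0 < l" "l < 1"
  shows "sgn ((1 - l) * x + l * y) = sgn x"
proof -
  consider "x < 0" "y < 0" | "x = 0" "y = 0" | "0 < x" "0 < y"
    using assms(1) by (metis linorder_neqE_linordered_idom sgn_0_0 sgn_neg sgn_1_neg)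
  then show ?thesis
  proof cases
    case 1
    then have "(1 - l) * x + l * y < 0" using assms by (intro add_neg_neg mult_pos_neg) auto
    with 1 show ?thesis by simp
  next
    case 3
    then have "0 < (1 - l) * x + l * y" using assms by (intro add_pos_pos mult_pos_pos) auto
    with 3 show ?thesis by simp
  qed simp
qed

lemma sgn_mult_unit_eq_iff:
  fixes s x y :: real
  assumes "\<bar>s\<bar> = 1" "x \<noteq> 0" "y \<noteq> 0"
  shows "sgn (s * x) = sgn (s * y) \<longleftrightarrow> (0 < x \<longleftrightarrow> 0 < y)"
proof -
  have "s = 1 \<or> s = -1" using assms(1) by linarith
  then show ?thesis using assms(2,3) by (auto simp: sgn_if)
qed

lemma adjacent_signs_common_wall:
  assumes "generic E n c" "generic E n c'" "e0 \<in> E"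
    and "sgn (c \<bullet> n e0) \<noteq> sgn (c' \<bullet> n e0)" and same: "same_signs (E - {e0}) n c c'"
  obtains d where "d \<bullet> n e0 = 0" "same_signs (E - {e0}) n d c"
proof
  define a a' where "a = c \<bullet> n e0" and "a' = c' \<bullet> n e0"
  have opposite: "(0 < a \<and> a' < 0) \<or> (a < 0 \<and> 0 < a')"
    using assms(1-4) unfolding generic_def a_def a'_def
    by (metis linorder_neqE_linordered_idom sgn_neg sgn_pos)
  define l where "l = a / (a - a')"
  have l: "0 < l" "l < 1" "l * (a - a') = a"
    using opposite unfolding l_def by (auto simp: field_simps)
  define d where "d = c + l *\<^sub>R (c' - c)"
  have inner_d: "d \<bullet> x = (1 - l) * (c \<bullet> x) + l * (c' \<bullet> x)" for x
    unfolding d_def by (simp add: algebra_simps)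
  show "d \<bullet> n e0 = 0"
    using l(3) unfolding inner_d a_def[symmetric] a'_def[symmetric] by (simp add: algebra_simps)
  show "same_signs (E - {e0}) n d c"
    using same sgn_convex_combination[OF _ l(1,2)] unfolding same_signs_def inner_d by simp
qed

lemma zonotope_edge:
  assumes "finite E" "generic E n c" "generic E n c'" "adjacent_signs E n c c'"
  shows "closed_segment (zonotope_vertex E n c) (zonotope_vertex E n c') face_of zonotope E n"
proof -
  obtain e0 where e0: "e0 \<in> E" and differ: "sgn (c \<bullet> n e0) \<noteq> sgn (c' \<bullet> n e0)"
    and same: "same_signs (E - {e0}) n c c'"
    using assms(4) unfolding adjacent_signs_def by blast
  obtain d where d: "d \<bullet> n e0 = 0" "same_signs (E - {e0}) n d c"
    using adjacent_signs_common_wall[OF assms(2,3) e0 differ same] .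
  define p where "p = zonotope_vertex (E - {e0}) n d"
  have "generic (E - {e0}) n d"
    using generic_same_signs[OF _ d(2)] assms(2) unfolding generic_def by blast
  then have face: "closed_segment (p - n e0) (p + n e0) face_of zonotope E n"
    unfolding p_def using zonotope_face_along_generator[of E e0 d n] assms(1) e0 d(1) by blast
  have "same_signs (E - {e0}) n c d" "same_signs (E - {e0}) n c' d"
    using same d(2) unfolding same_signs_def by simp_all
  then have p: "zonotope_vertex (E - {e0}) n c = p" "zonotope_vertex (E - {e0}) n c' = p"
    unfolding p_def by (simp_all add: zonotope_vertex_cong)
  have "c \<bullet> n e0 \<noteq> 0" "c' \<bullet> n e0 \<noteq> 0"
    using assms(2,3) e0 unfolding generic_def by auto
  then consider "sgn (c \<bullet> n e0) = 1" "sgn (c' \<bullet> n e0) = -1"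
    | "sgn (c \<bullet> n e0) = -1" "sgn (c' \<bullet> n e0) = 1"
    using differ by (auto simp: sgn_if split: if_splits)
  then show ?thesis
    using face face[unfolded closed_segment_commute[of "p - n e0"]]
    unfolding zonotope_vertex_remove[OF assms(1) e0, of n] p by cases simp_all
qed

definition region_cycle :: "'e set \<Rightarrow> ('e \<Rightarrow> 'a::euclidean_space) \<Rightarrow> 'a list \<Rightarrow> bool" where
  "region_cycle E n cs \<longleftrightarrow>
     (\<forall>c\<in>set cs. generic E n c) \<and>
     (\<forall>a. generic E n a \<longrightarrow> (\<exists>c\<in>set cs. same_signs E n a c)) \<and>
     (\<forall>i<length cs. \<forall>j<length cs. same_signs E n (cs ! i) (cs ! j) \<longrightarrow> i = j) \<and>
     (2 \<le> length cs \<longrightarrow>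
        (\<forall>i<length cs. adjacent_signs E n (cs ! i) (cs ! ((i + 1) mod length cs))))"

lemma skel_vertices_zonotope:
  fixes E :: "'e::finite set" and n :: "'e \<Rightarrow> 'a::euclidean_space"
  assumes "\<forall>e\<in>E. n e \<noteq> 0"
  shows "skel_vertices (zonotope E n) = zonotope_vertex E n ` {c. generic E n c}"
proof (intro equalityI subsetI)
  fix x assume "x \<in> skel_vertices (zonotope E n)"
  then obtain c where "generic E n c" "x = zonotope_vertex E n c"
    using extreme_point_of_zonotope[OF assms] unfolding skel_vertices_def by blast
  then show "x \<in> zonotope_vertex E n ` {c. generic E n c}" by blast
qed (use zonotope_vertex_extreme_point[OF finite] in \<open>auto simp: skel_vertices_def\<close>)

lemma skel_adj_zonotope:
  assumes "finite E" "generic E n c" "generic E n c'" "adjacent_signs E n c c'"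
  shows "skel_adj (zonotope E n) (zonotope_vertex E n c) (zonotope_vertex E n c')"
proof -
  have "\<not> same_signs E n c c'"
    using assms(4) unfolding adjacent_signs_def same_signs_def by blast
  then have "zonotope_vertex E n c \<noteq> zonotope_vertex E n c'"
    using zonotope_vertex_eq_iff[OF assms(1,2)] by simp
  then show ?thesis
    unfolding skel_adj_def skel_vertices_def
    using zonotope_vertex_extreme_point[OF assms(1,2)] zonotope_vertex_extreme_point[OF assms(1,3)]
      zonotope_edge[OF assms] by simp
qed

theorem hamiltonian_cycle_zonotope:
  fixes E :: "'e::finite set" and n :: "'e \<Rightarrow> 'a::euclidean_space"
  assumes nonzero: "\<forall>e\<in>E. n e \<noteq> 0" and cycle: "region_cycle E n cs" and length: "3 \<le> length cs"
  shows "hamiltonian_cycle (skel_vertices (zonotope E n)) (skel_adj (zonotope E n))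
           (map (zonotope_vertex E n) cs)"
proof -
  have generic: "generic E n (cs ! i)" if "i < length cs" for i
    using cycle that unfolding region_cycle_def by auto
  have "distinct (map (zonotope_vertex E n) cs)"
    using cycle zonotope_vertex_eq_iff[OF finite generic]
    unfolding region_cycle_def distinct_conv_nth by auto
  moreover have "zonotope_vertex E n ` set cs = zonotope_vertex E n ` {c. generic E n c}"
    using cycle zonotope_vertex_cong unfolding region_cycle_def by fastforce
  moreover have "skel_adj (zonotope E n) (map (zonotope_vertex E n) cs ! i)
                   (map (zonotope_vertex E n) cs ! (Suc i mod length cs))" if i: "i < length cs" for i
  proof -
    have "Suc i mod length cs < length cs" using i by (intro mod_less_divisor) auto
    moreover have "adjacent_signs E n (cs ! i) (cs ! (Suc i mod length cs))"
      using cycle length i unfolding region_cycle_def by simp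
    ultimately show ?thesis using skel_adj_zonotope[OF finite generic generic] i by simp
  qed
  ultimately show ?thesis
    using length unfolding hamiltonian_cycle_def skel_vertices_zonotope[OF nonzero] by simp
qed

section \<open>Signed graphic zonotopes\<close>

lemma signed_graph_edgeD: "signed_graph Ep En \<Longrightarrow> e \<in> Ep \<union> En \<Longrightarrow> \<exists>i j. i \<noteq> j \<and> e = {i, j}"
  unfolding signed_graph_def by (elim conjE bspec)

text \<open>The orientation of a positive edge is chosen arbitrarily; the segment spanned by the
  normal does not depend on it.\<close>

definition edge_normal :: "'n::finite set set \<Rightarrow> 'n set \<Rightarrow> real^'n" where
  "edge_normal Ep e = (SOME x. \<exists>i j. e = {i, j} \<and> i \<noteq> j \<and>
       x = (if e \<in> Ep then axis i 1 - axis j 1 else axis i 1 + axis j 1))"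

lemma edge_normal_eq:
  assumes "i \<noteq> j"
  obtains s :: real where "\<bar>s\<bar> = 1"
    "edge_normal Ep {i, j} =
       (if {i, j} \<in> Ep then s *\<^sub>R (axis i 1 - axis j 1) else axis i 1 + axis j 1)"
proof -
  obtain i' j' where ij': "{i, j} = {i', j'}" and
    normal: "edge_normal Ep {i, j} =
      (if {i, j} \<in> Ep then axis i' 1 - axis j' 1 else axis i' 1 + axis j' 1)"
    using someI_ex[of "\<lambda>x. \<exists>i' j'. {i, j} = {i', j'} \<and> i' \<noteq> j' \<and>
      x = (if {i, j} \<in> Ep then axis i' 1 - axis j' 1 else axis i' 1 + axis j' 1)"] assms
    unfolding edge_normal_def by blast
  from ij' have "i' = i \<and> j' = j \<or> i' = j \<and> j' = i" by (auto simp: doubleton_eq_iff)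
  then show ?thesis
  proof
    assume "i' = i \<and> j' = j"
    then show ?thesis using that[of 1] normal by simp
  next
    assume "i' = j \<and> j' = i"
    then show ?thesis using that[of "-1"] normal by (simp add: add.commute)
  qed
qed

lemma inner_edge_normal_pos:
  assumes "i \<noteq> j" "{i, j} \<in> Ep"
  obtains s :: real where "\<bar>s\<bar> = 1" "\<forall>c. c \<bullet> edge_normal Ep {i, j} = s * (c $ i - c $ j)"
proof -
  obtain s :: real where s: "\<bar>s\<bar> = 1"
    and "edge_normal Ep {i, j} = (if {i, j} \<in> Ep then s *\<^sub>R (axis i 1 - axis j 1) else axis i 1 + axis j 1)"
    using edge_normal_eq[OF assms(1)] .
  with assms(2) have "edge_normal Ep {i, j} = s *\<^sub>R (axis i 1 - axis j 1)" by simp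
  then show ?thesis using that[OF s] by (simp add: inner_axis inner_diff_right)
qed

lemma inner_edge_normal_neg:
  assumes "i \<noteq> j" "{i, j} \<notin> Ep"
  shows "c \<bullet> edge_normal Ep {i, j} = c $ i + c $ j"
proof -
  obtain s :: real where
    "edge_normal Ep {i, j} = (if {i, j} \<in> Ep then s *\<^sub>R (axis i 1 - axis j 1) else axis i 1 + axis j 1)"
    using edge_normal_eq[OF assms(1)] .
  with assms(2) show ?thesis by (simp add: inner_axis inner_add_right)
qed

lemma edge_normal_nonzero:
  assumes "signed_graph Ep En" "e \<in> Ep \<union> En"
  shows "edge_normal Ep e \<noteq> 0"
proof -
  obtain i j where ij: "i \<noteq> j" "e = {i, j}"
    using signed_graph_edgeD[OF assms] by (elim exE conjE)
  obtain s :: real where "\<bar>s\<bar> = 1"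
    "edge_normal Ep e = (if e \<in> Ep then s *\<^sub>R (axis i 1 - axis j 1) else axis i 1 + axis j 1)"
    using edge_normal_eq[OF ij(1)] unfolding ij(2) .
  then have "edge_normal Ep e $ i \<noteq> 0" using ij(1) by (auto simp: axis_def)
  then show ?thesis by auto
qed

lemma segment_scale_unit:
  fixes x :: "'a::real_vector"
  assumes "\<bar>s\<bar> = 1"
  shows "{(t * s) *\<^sub>R x | t. \<bar>t\<bar> \<le> 1} = {t *\<^sub>R x | t. \<bar>t\<bar> \<le> 1}"
proof (intro equalityI subsetI)
  fix y assume "y \<in> {(t * s) *\<^sub>R x | t. \<bar>t\<bar> \<le> 1}"
  then obtain t where "\<bar>t\<bar> \<le> 1" "y = (t * s) *\<^sub>R x" by auto
  then show "y \<in> {t *\<^sub>R x | t. \<bar>t\<bar> \<le> 1}"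
    using assms by (auto simp: abs_mult)
next
  fix y assume "y \<in> {t *\<^sub>R x | t. \<bar>t\<bar> \<le> 1}"
  then obtain t where t: "\<bar>t\<bar> \<le> 1" "y = t *\<^sub>R x" by auto
  have "s * s = 1" using assms by (metis abs_mult_self_eq mult_1_left)
  then have "y = ((t * s) * s) *\<^sub>R x" using t by (simp add: mult.assoc)
  moreover have "\<bar>t * s\<bar> \<le> 1" using t assms by (simp add: abs_mult)
  ultimately show "y \<in> {(t * s) *\<^sub>R x | t. \<bar>t\<bar> \<le> 1}" by blast
qed

lemma pos_segment_eq:
  fixes i j :: "'n::finite"
  assumes "i \<noteq> j"
  shows "pos_segment {i, j} = {t *\<^sub>R (axis i 1 - axis j 1) | t. \<bar>t\<bar> \<le> 1}"
proof (intro equalityI subsetI)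
  fix x assume "x \<in> pos_segment {i, j}"
  then obtain a b t where ab: "{i, j} = {a, b}" and t: "\<bar>t\<bar> \<le> 1"
    and x: "x = t *\<^sub>R (axis a 1 - axis b 1)"
    unfolding pos_segment_def by blast
  from ab have "a = i \<and> b = j \<or> a = j \<and> b = i" by (auto simp: doubleton_eq_iff)
  then show "x \<in> {t *\<^sub>R (axis i 1 - axis j 1) | t. \<bar>t\<bar> \<le> 1}"
  proof
    assume "a = j \<and> b = i"
    then have "x = (- t) *\<^sub>R (axis i 1 - axis j 1)" using x by (simp add: algebra_simps)
    with t show ?thesis by (intro CollectI exI[of _ "- t"]) simp
  qed (use x t in blast)
next
  fix x :: "real^'n" assume "x \<in> {t *\<^sub>R (axis i 1 - axis j 1) | t. \<bar>t\<bar> \<le> 1}"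
  then show "x \<in> pos_segment {i, j}" unfolding pos_segment_def using assms by blast
qed

lemma neg_segment_eq:
  fixes i j :: "'n::finite"
  assumes "i \<noteq> j"
  shows "neg_segment {i, j} = {t *\<^sub>R (axis i 1 + axis j 1) | t. \<bar>t\<bar> \<le> 1}"
proof (intro equalityI subsetI)
  fix x assume "x \<in> neg_segment {i, j}"
  then obtain a b t where ab: "{i, j} = {a, b}" and t: "\<bar>t\<bar> \<le> 1"
    and x: "x = t *\<^sub>R (axis a 1 + axis b 1)"
    unfolding neg_segment_def by blast
  from ab have "axis a 1 + axis b 1 = axis i 1 + (axis j 1 :: real^'n)"
    by (auto simp: doubleton_eq_iff add.commute)
  with x t show "x \<in> {t *\<^sub>R (axis i 1 + axis j 1) | t. \<bar>t\<bar> \<le> 1}" by auto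
next
  fix x :: "real^'n" assume "x \<in> {t *\<^sub>R (axis i 1 + axis j 1) | t. \<bar>t\<bar> \<le> 1}"
  then show "x \<in> neg_segment {i, j}" unfolding neg_segment_def using assms by blast
qed

lemma edge_segment_eq:
  assumes "i \<noteq> j"
  shows "edge_segment Ep {i, j} = {t *\<^sub>R edge_normal Ep {i, j} | t. \<bar>t\<bar> \<le> 1}"
proof -
  obtain s :: real where s: "\<bar>s\<bar> = 1" and normal:
    "edge_normal Ep {i, j} = (if {i, j} \<in> Ep then s *\<^sub>R (axis i 1 - axis j 1) else axis i 1 + axis j 1)"
    using edge_normal_eq[OF assms] .
  show ?thesis
  proof (cases "{i, j} \<in> Ep")
    case True
    then show ?thesis
      unfolding edge_segment_def normal pos_segment_eq[OF assms]
      by (simp only: True if_True scaleR_scaleR segment_scale_unit[OF s])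
  next
    case False
    then show ?thesis
      unfolding edge_segment_def normal neg_segment_eq[OF assms] by simp
  qed
qed

lemma sum_segments_eq_zonotope:
  assumes "\<And>e. e \<in> E \<Longrightarrow> seg e = {t *\<^sub>R n e | t. \<bar>t\<bar> \<le> 1}"
  shows "{\<Sum>e\<in>E. f e | f. \<forall>e\<in>E. f e \<in> seg e} = zonotope E n"
proof (intro equalityI subsetI)
  fix x assume "x \<in> {\<Sum>e\<in>E. f e | f. \<forall>e\<in>E. f e \<in> seg e}"
  then obtain f where x: "x = (\<Sum>e\<in>E. f e)" and "\<forall>e\<in>E. \<exists>t. f e = t *\<^sub>R n e \<and> \<bar>t\<bar> \<le> 1"
    using assms by blast
  then obtain t where t: "\<forall>e\<in>E. f e = t e *\<^sub>R n e \<and> \<bar>t e\<bar> \<le> 1" by metis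
  then have "x = (\<Sum>e\<in>E. t e *\<^sub>R n e)" unfolding x by simp
  with t show "x \<in> zonotope E n" unfolding zonotope_def by blast
next
  fix x assume "x \<in> zonotope E n"
  then obtain t where "x = (\<Sum>e\<in>E. t e *\<^sub>R n e)" and "\<forall>e\<in>E. \<bar>t e\<bar> \<le> 1"
    unfolding zonotope_def by blast
  then show "x \<in> {\<Sum>e\<in>E. f e | f. \<forall>e\<in>E. f e \<in> seg e}"
    using assms by (intro CollectI exI[of _ "\<lambda>e. t e *\<^sub>R n e"]) auto
qed

lemma signed_graphic_zonotope_eq:
  assumes "signed_graph Ep En"
  shows "signed_graphic_zonotope Ep En = zonotope (Ep \<union> En) (edge_normal Ep)"
  unfolding signed_graphic_zonotope_def
proof (rule sum_segments_eq_zonotope)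
  fix e assume "e \<in> Ep \<union> En"
  from signed_graph_edgeD[OF assms this] obtain i j where "i \<noteq> j" "e = {i, j}"
    by (elim exE conjE)
  then show "edge_segment Ep e = {t *\<^sub>R edge_normal Ep e | t. \<bar>t\<bar> \<le> 1}"
    using edge_segment_eq by blast
qed

section \<open>Thresholds in finite sets of reals\<close>

lemma sorted_list_threshold:
  fixes l :: "real list"
  assumes sorted: "sorted_wrt (<) l" and "k \<le> length l"
  obtains t where "\<And>i. i < length l \<Longrightarrow> l ! i < t \<longleftrightarrow> i < k" "\<And>i. i < length l \<Longrightarrow> l ! i \<noteq> t"
proof -
  have less: "l ! i < l ! j" if "i < j" "j < length l" for i j
    using sorted_wrt_nth_less[OF sorted that] .
  have le: "l ! i \<le> l ! j" if "i \<le> j" "j < length l" for i j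
    using less[of i j] that by (cases "i = j") auto
  define t where "t = (if k = length l then l ! (k - 1) + 1
                       else if k = 0 then l ! 0 - 1 else (l ! (k - 1) + l ! k) / 2)"
  have "(l ! i < t \<longleftrightarrow> i < k) \<and> l ! i \<noteq> t" if i: "i < length l" for i
  proof -
    consider "k = length l" | "k = 0" "k < length l" | "0 < k" "k < length l"
      using assms(2) by linarith
    then show ?thesis
    proof cases
      case 1
      have "i \<le> k - 1" "k - 1 < length l" using i 1 by auto
      then have "l ! i \<le> l ! (k - 1)" by (rule le)
      with 1 i show ?thesis unfolding t_def by auto
    next
      case 2
      then show ?thesis using le[of 0 i] i unfolding t_def by auto
    next
      case 3
      then have "l ! (k - 1) < t" "t < l ! k"
        using less[of "k - 1" k] unfolding t_def by auto
      moreover have "l ! i \<le> l ! (k - 1)" if "i < k" using le[of i "k - 1"] 3 that by simp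
      moreover have "l ! k \<le> l ! i" if "\<not> i < k" using le[of k i] i that by simp
      ultimately show ?thesis by (cases "i < k") auto
    qed
  qed
  then show ?thesis using that by blast
qed

lemma exists_cut:
  fixes W :: "real set"
  assumes "finite W" "k \<le> card W"
  obtains t where "t \<notin> W" "card {x\<in>W. x < t} = k"
proof -
  define l where "l = sorted_list_of_set W"
  have sorted: "sorted_wrt (<) l" and W: "W = set l" and len: "length l = card W"
    and "distinct l"
    unfolding l_def using assms(1) by auto
  obtain t where below: "\<And>i. i < length l \<Longrightarrow> l ! i < t \<longleftrightarrow> i < k"
    and not_cut: "\<And>i. i < length l \<Longrightarrow> l ! i \<noteq> t"
    using sorted_list_threshold[OF sorted] assms(2) len by metis
  have "{x\<in>W. x < t} = (!) l ` {..<k}"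
  proof (intro equalityI subsetI)
    fix x assume "x \<in> {x\<in>W. x < t}"
    then obtain i where "i < length l" "x = l ! i" "l ! i < t"
      unfolding W by (auto simp: in_set_conv_nth)
    then show "x \<in> (!) l ` {..<k}" using below by auto
  next
    fix x assume "x \<in> (!) l ` {..<k}"
    then obtain i where "i < k" "x = l ! i" by auto
    moreover from \<open>i < k\<close> have "i < length l" using assms(2) len by linarith
    ultimately show "x \<in> {x\<in>W. x < t}" using below unfolding W by auto
  qed
  moreover have "inj_on ((!) l) {..<k}"
    using \<open>distinct l\<close> assms(2) len by (auto simp: inj_on_def nth_eq_iff_index_eq)
  ultimately have "card {x\<in>W. x < t} = k" by (simp add: card_image)
  moreover have "t \<notin> W" using not_cut unfolding W by (auto simp: in_set_conv_nth)
  ultimately show ?thesis using that by blast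
qed

lemma exists_cut_on:
  fixes f :: "'a \<Rightarrow> real"
  assumes "finite A" "inj_on f A" "k \<le> card A"
  obtains t where "\<forall>a\<in>A. f a \<noteq> t" "card {a\<in>A. f a < t} = k"
proof -
  obtain t where t: "t \<notin> f ` A" "card {x\<in>f ` A. x < t} = k"
    using exists_cut[of "f ` A" k] assms by (auto simp: card_image)
  have "{x\<in>f ` A. x < t} = f ` {a\<in>A. f a < t}" by auto
  moreover have "inj_on f {a\<in>A. f a < t}" using assms(2) by (rule inj_on_subset) auto
  ultimately have "card {a\<in>A. f a < t} = k" using t(2) by (simp add: card_image)
  moreover have "\<forall>a\<in>A. f a \<noteq> t" using t(1) by auto
  ultimately show ?thesis using that by blast
qed

lemma cut_step:
  fixes f :: "'a \<Rightarrow> real"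
  assumes "finite A" "card {a\<in>A. f a < s} = k" "card {a\<in>A. f a < t} = Suc k"
  obtains a0 where "a0 \<in> A" "\<not> f a0 < s" "f a0 < t"
    "\<And>a. a \<in> A \<Longrightarrow> a \<noteq> a0 \<Longrightarrow> f a < s \<longleftrightarrow> f a < t"
proof -
  let ?S = "{a\<in>A. f a < s}" and ?T = "{a\<in>A. f a < t}"
  have "s < t"
  proof (rule ccontr)
    assume "\<not> s < t"
    then have "card ?T \<le> card ?S" using assms(1) by (intro card_mono) auto
    with assms(2,3) show False by simp
  qed
  then have "?S \<subseteq> ?T" by auto
  then have "card (?T - ?S) = 1" using assms by (simp add: card_Diff_subset)
  then obtain a0 where "?T - ?S = {a0}" by (auto simp: card_1_singleton_iff)
  then have a0: "a0 \<in> A" "\<not> f a0 < s" "f a0 < t" by auto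
  show ?thesis
  proof (rule that[OF a0])
    fix a assume a: "a \<in> A" "a \<noteq> a0"
    show "f a < s \<longleftrightarrow> f a < t"
    proof
      assume "f a < t"
      with a \<open>?T - ?S = {a0}\<close> have "a \<in> ?S" by blast
      then show "f a < s" by simp
    qed (use \<open>s < t\<close> in simp)
  qed
qed

lemma cut_sets_eq:
  fixes f g :: "'a \<Rightarrow> real"
  assumes "finite A" and order: "\<And>a b. a \<in> A \<Longrightarrow> b \<in> A \<Longrightarrow> f a < f b \<longleftrightarrow> g a < g b"
    and "\<forall>a\<in>A. f a \<noteq> s" "\<forall>a\<in>A. g a \<noteq> t"
    and card: "card {a\<in>A. f a < s} = card {a\<in>A. g a < t}"
  shows "{a\<in>A. f a < s} = {a\<in>A. g a < t}"
proof -
  let ?S = "{a\<in>A. f a < s}" and ?T = "{a\<in>A. g a < t}"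
  have "?S \<subseteq> ?T \<or> ?T \<subseteq> ?S"
  proof (rule ccontr)
    assume "\<not> (?S \<subseteq> ?T \<or> ?T \<subseteq> ?S)"
    then obtain a b where a: "a \<in> A" "f a < s" "\<not> g a < t" and b: "b \<in> A" "g b < t" "\<not> f b < s"
      by auto
    have "f b \<noteq> s" "g a \<noteq> t" using assms(3,4) a(1) b(1) by auto
    then have "f a < f b" "g b < g a" using a b by linarith+
    with order[OF a(1) b(1)] show False by linarith
  qed
  moreover have "finite ?S" "finite ?T" using assms(1) by auto
  ultimately show ?thesis
    using card_subset_eq[of ?T ?S] card_subset_eq[of ?S ?T] card by auto
qed

section \<open>Extending a region cycle by a signed simplicial vertex\<close>

definition induced_edges :: "'n set set \<Rightarrow> 'n set set \<Rightarrow> 'n set \<Rightarrow> 'n set set" where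
  "induced_edges Ep En S = {e \<in> Ep \<union> En. e \<subseteq> S}"

locale simplicial_extension =
  fixes Ep En :: "'n::finite set set" and v :: 'n and S :: "'n set"
  assumes signed_graph: "signed_graph Ep En"
    and v_notin: "v \<notin> S"
    and simplicial: "signed_simplicial_in Ep En (insert v S) v"
begin

abbreviation "n \<equiv> edge_normal Ep"
abbreviation "E \<equiv> induced_edges Ep En S"
abbreviation "E' \<equiv> induced_edges Ep En (insert v S)"

definition nbrs :: "'n set" where
  "nbrs = {u\<in>S. {v, u} \<in> Ep \<union> En}"

text \<open>The hyperplane of the edge \<open>{v, u}\<close> is \<open>x $ v = nbr_value u x\<close>.  Signed simpliciality
  of \<open>v\<close> makes the hyperplane of the edge between two neighbours \<open>u, u'\<close> the locus
  \<open>nbr_value u x = nbr_value u' x\<close>, so a region of the old arrangement orders the neighbours.\<close>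

definition nbr_value :: "'n \<Rightarrow> real^'n \<Rightarrow> real" where
  "nbr_value u c = (if {v, u} \<in> Ep then c $ u else - c $ u)"

definition with_v :: "real^'n \<Rightarrow> real \<Rightarrow> real^'n" where
  "with_v c t = (\<chi> i. if i = v then t else c $ i)"

lemma nbr_ne_v: "u \<in> nbrs \<Longrightarrow> u \<noteq> v"
  using v_notin unfolding nbrs_def by auto

lemma new_edges_eq: "E' = E \<union> (\<lambda>u. {v, u}) ` nbrs"
proof (intro equalityI subsetI)
  fix e assume "e \<in> E'"
  then have e: "e \<in> Ep \<union> En" "e \<subseteq> insert v S" unfolding induced_edges_def by auto
  show "e \<in> E \<union> (\<lambda>u. {v, u}) ` nbrs"
  proof (cases "v \<in> e")
    case False
    then show ?thesis using e unfolding induced_edges_def by auto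
  next
    case True
    obtain i j where "i \<noteq> j" "e = {i, j}" using signed_graph_edgeD[OF signed_graph e(1)] by (elim exE conjE)
    from True \<open>e = {i, j}\<close> have "v = i \<or> v = j" by blast
    then obtain u where "e = {v, u}" "u \<noteq> v"
    proof
      assume "v = i"
      then show thesis using that[of j] \<open>e = {i, j}\<close> \<open>i \<noteq> j\<close> by simp
    next
      assume "v = j"
      then show thesis using that[of i] \<open>e = {i, j}\<close> \<open>i \<noteq> j\<close> by (simp add: insert_commute)
    qed
    with e have "u \<in> nbrs" unfolding nbrs_def by auto
    with \<open>e = {v, u}\<close> show ?thesis by blast
  qed
qed (auto simp: induced_edges_def nbrs_def)

lemma card_new_edges: "card E' = card E + card nbrs"
proof -
  have "E \<inter> (\<lambda>u. {v, u}) ` nbrs = {}"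
    using v_notin unfolding induced_edges_def by auto
  moreover have "inj_on (\<lambda>u. {v, u}) nbrs"
    using nbr_ne_v by (auto simp: inj_on_def doubleton_eq_iff)
  ultimately show ?thesis
    unfolding new_edges_eq by (simp add: card_Un_disjoint card_image)
qed

lemma with_v_nth [simp]: "with_v c t $ v = t" "i \<noteq> v \<Longrightarrow> with_v c t $ i = c $ i"
  unfolding with_v_def by simp_all

lemma nbr_value_with_v [simp]: "u \<in> nbrs \<Longrightarrow> nbr_value u (with_v c t) = nbr_value u c"
  unfolding nbr_value_def using nbr_ne_v by simp

lemma inner_with_v_old_edge [simp]:
  assumes "e \<in> E"
  shows "with_v c t \<bullet> n e = c \<bullet> n e"
proof -
  have e: "e \<in> Ep \<union> En" "e \<subseteq> S" using assms unfolding induced_edges_def by auto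
  obtain i j where ij: "i \<noteq> j" "e = {i, j}"
    using signed_graph_edgeD[OF signed_graph e(1)] by (elim exE conjE)
  have "i \<noteq> v" "j \<noteq> v" using e(2) v_notin ij by auto
  show ?thesis
  proof (cases "{i, j} \<in> Ep")
    case True
    obtain s :: real where "\<bar>s\<bar> = 1" "\<forall>c. c \<bullet> n {i, j} = s * (c $ i - c $ j)"
      using inner_edge_normal_pos[OF ij(1) True] .
    then show ?thesis using \<open>i \<noteq> v\<close> \<open>j \<noteq> v\<close> unfolding ij(2) by simp
  next
    case False
    then show ?thesis
      using \<open>i \<noteq> v\<close> \<open>j \<noteq> v\<close> unfolding ij(2) by (simp add: inner_edge_normal_neg[OF ij(1)])
  qed
qed

lemma inner_nbr_edge:
  assumes "u \<in> nbrs"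
  obtains s :: real where "\<bar>s\<bar> = 1" "\<forall>c. c \<bullet> n {v, u} = s * (c $ v - nbr_value u c)"
proof (cases "{v, u} \<in> Ep")
  case True
  obtain s :: real where "\<bar>s\<bar> = 1" "\<forall>c. c \<bullet> n {v, u} = s * (c $ v - c $ u)"
    using inner_edge_normal_pos[OF nbr_ne_v[OF assms, symmetric] True] .
  with True show ?thesis using that[of s] unfolding nbr_value_def by simp
next
  case False
  then show ?thesis
    using that[of 1] inner_edge_normal_neg[OF nbr_ne_v[OF assms, symmetric] False]
    unfolding nbr_value_def by simp
qed

lemma nbr_pair_edge_sign:
  assumes "u \<in> nbrs" "u' \<in> nbrs" "u \<noteq> u'"
  shows "({v, u} \<in> Ep \<longleftrightarrow> {v, u'} \<in> Ep) \<Longrightarrow> {u, u'} \<in> Ep"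
    and "\<not> ({v, u} \<in> Ep \<longleftrightarrow> {v, u'} \<in> Ep) \<Longrightarrow> {u, u'} \<in> En"
proof -
  have in_S: "u \<in> insert v S" "u' \<in> insert v S" and edges: "{v, u} \<in> Ep \<union> En" "{v, u'} \<in> Ep \<union> En"
    using assms(1,2) unfolding nbrs_def by auto
  note simpl = simplicial[unfolded signed_simplicial_in_def, rule_format]
  note uu' = simpl[OF in_S nbr_ne_v[OF assms(1)] nbr_ne_v[OF assms(2)] assms(3)]
    and u'u = simpl[OF in_S(2,1) nbr_ne_v[OF assms(2)] nbr_ne_v[OF assms(1)] assms(3)[symmetric]]
  show "({v, u} \<in> Ep \<longleftrightarrow> {v, u'} \<in> Ep) \<Longrightarrow> {u, u'} \<in> Ep"
    using uu' edges by blast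
  assume "\<not> ({v, u} \<in> Ep \<longleftrightarrow> {v, u'} \<in> Ep)"
  then have "{v, u} \<in> Ep \<and> {v, u'} \<in> En \<or> {v, u} \<in> En \<and> {v, u'} \<in> Ep"
    using edges by blast
  moreover have "{u', u} = {u, u'}" by blast
  ultimately show "{u, u'} \<in> En" using uu' u'u by metis
qed

lemma inner_nbr_pair_edge:
  assumes "u \<in> nbrs" "u' \<in> nbrs" "u \<noteq> u'"
  obtains s :: real where "{u, u'} \<in> E" "\<bar>s\<bar> = 1"
    "\<forall>c. c \<bullet> n {u, u'} = s * (nbr_value u c - nbr_value u' c)"
proof -
  have "{u, u'} \<in> Ep \<union> En" "{u, u'} \<subseteq> S"
    using nbr_pair_edge_sign[OF assms] assms(1,2) unfolding nbrs_def by blast+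
  then have "{u, u'} \<in> E" unfolding induced_edges_def by blast
  show ?thesis
  proof (cases "{v, u} \<in> Ep \<longleftrightarrow> {v, u'} \<in> Ep")
    case True
    obtain s :: real where "\<bar>s\<bar> = 1" "\<forall>c. c \<bullet> n {u, u'} = s * (c $ u - c $ u')"
      using inner_edge_normal_pos[OF assms(3) nbr_pair_edge_sign(1)[OF assms True]] .
    with True show ?thesis
      using that[OF \<open>{u, u'} \<in> E\<close>, of "if {v, u} \<in> Ep then s else - s"]
      unfolding nbr_value_def by (auto simp: algebra_simps)
  next
    case False
    have "{u, u'} \<notin> Ep"
      using nbr_pair_edge_sign(2)[OF assms False] signed_graph unfolding signed_graph_def by blast
    with False show ?thesis
      using that[OF \<open>{u, u'} \<in> E\<close>, of "if {v, u} \<in> Ep then 1 else - 1"]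
        inner_edge_normal_neg[OF assms(3)] unfolding nbr_value_def by auto
  qed
qed

lemma inner_nbr_edge_nonzero_iff:
  assumes "u \<in> nbrs"
  shows "c \<bullet> n {v, u} \<noteq> 0 \<longleftrightarrow> nbr_value u c \<noteq> c $ v"
  using inner_nbr_edge[OF assms] by (metis abs_0 mult_eq_0_iff right_minus_eq zero_neq_one)

lemma sgn_inner_nbr_edge_eq_iff:
  assumes "u \<in> nbrs" "nbr_value u a \<noteq> a $ v" "nbr_value u b \<noteq> b $ v"
  shows "sgn (a \<bullet> n {v, u}) = sgn (b \<bullet> n {v, u}) \<longleftrightarrow>
         (nbr_value u a < a $ v \<longleftrightarrow> nbr_value u b < b $ v)"
proof -
  obtain s :: real where "\<bar>s\<bar> = 1" "\<forall>c. c \<bullet> n {v, u} = s * (c $ v - nbr_value u c)"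
    using inner_nbr_edge[OF assms(1)] .
  then show ?thesis using sgn_mult_unit_eq_iff assms(2,3) by simp
qed

lemma nbr_value_less_iff:
  assumes "generic E n a" "generic E n c" "same_signs E n a c" "u \<in> nbrs" "u' \<in> nbrs"
  shows "nbr_value u a < nbr_value u' a \<longleftrightarrow> nbr_value u c < nbr_value u' c"
proof (cases "u = u'")
  case False
  obtain s :: real where e: "{u, u'} \<in> E" and s: "\<bar>s\<bar> = 1"
    and inner: "\<forall>c. c \<bullet> n {u, u'} = s * (nbr_value u c - nbr_value u' c)"
    using inner_nbr_pair_edge[OF assms(4,5) False] .
  have ne: "nbr_value u a \<noteq> nbr_value u' a" "nbr_value u c \<noteq> nbr_value u' c"
    using assms(1,2) e inner unfolding generic_def by force+
  moreover have "sgn (a \<bullet> n {u, u'}) = sgn (c \<bullet> n {u, u'})"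
    using assms(3) e unfolding same_signs_def by blast
  ultimately have "0 < nbr_value u a - nbr_value u' a \<longleftrightarrow> 0 < nbr_value u c - nbr_value u' c"
    using sgn_mult_unit_eq_iff[OF s] inner by simp
  then show ?thesis using ne by auto
qed simp

lemma inj_on_nbr_value:
  assumes "generic E n c"
  shows "inj_on (\<lambda>u. nbr_value u c) nbrs"
proof (rule inj_onI, rule ccontr)
  fix u u' assume "u \<in> nbrs" "u' \<in> nbrs" "nbr_value u c = nbr_value u' c" "u \<noteq> u'"
  moreover obtain s :: real where "{u, u'} \<in> E"
    "\<forall>c. c \<bullet> n {u, u'} = s * (nbr_value u c - nbr_value u' c)"
    using inner_nbr_pair_edge[OF \<open>u \<in> nbrs\<close> \<open>u' \<in> nbrs\<close> \<open>u \<noteq> u'\<close>] by blast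
  ultimately show False using assms unfolding generic_def by auto
qed

definition cut :: "real^'n \<Rightarrow> nat \<Rightarrow> real" where
  "cut c k = (SOME t. (\<forall>u\<in>nbrs. nbr_value u c \<noteq> t) \<and> card {u\<in>nbrs. nbr_value u c < t} = k)"

lemma cut_threshold:
  assumes "generic E n c" "k \<le> card nbrs"
  shows cut_ne: "\<And>u. u \<in> nbrs \<Longrightarrow> nbr_value u c \<noteq> cut c k"
    and card_below_cut: "card {u\<in>nbrs. nbr_value u c < cut c k} = k"
proof -
  have "\<exists>t. (\<forall>u\<in>nbrs. nbr_value u c \<noteq> t) \<and> card {u\<in>nbrs. nbr_value u c < t} = k"
    using exists_cut_on[OF _ inj_on_nbr_value[OF assms(1)] assms(2)] by (metis finite)
  from someI_ex[OF this]
  show "\<And>u. u \<in> nbrs \<Longrightarrow> nbr_value u c \<noteq> cut c k"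
    and "card {u\<in>nbrs. nbr_value u c < cut c k} = k"
    unfolding cut_def by blast+
qed

lemma below_cut_0: "generic E n c \<Longrightarrow> u \<in> nbrs \<Longrightarrow> \<not> nbr_value u c < cut c 0"
  using card_below_cut[of c 0] by auto

lemma below_cut_top: "generic E n c \<Longrightarrow> u \<in> nbrs \<Longrightarrow> nbr_value u c < cut c (card nbrs)"
  using card_below_cut[of c "card nbrs"] card_subset_eq[of nbrs "{u\<in>nbrs. nbr_value u c < cut c (card nbrs)}"]
  by auto

definition lift :: "real^'n \<Rightarrow> nat \<Rightarrow> real^'n" where
  "lift c k = with_v c (cut c k)"

lemma lift_generic:
  assumes "generic E n c" "k \<le> card nbrs"
  shows "generic E' n (lift c k)"
  unfolding generic_def new_edges_eq
proof (intro ballI, elim UnE imageE)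
  show "lift c k \<bullet> n e \<noteq> 0" if "e \<in> E" for e
    using assms(1) that unfolding lift_def generic_def by simp
  show "lift c k \<bullet> n e \<noteq> 0" if "e = {v, u}" "u \<in> nbrs" for e u
    using that cut_ne[OF assms] inner_nbr_edge_nonzero_iff unfolding lift_def by simp
qed

lemma sgn_lift_eq_iff:
  assumes "generic E n c" "generic E n c'" "k \<le> card nbrs" "k' \<le> card nbrs" "u \<in> nbrs"
  shows "sgn (lift c k \<bullet> n {v, u}) = sgn (lift c' k' \<bullet> n {v, u}) \<longleftrightarrow>
         (nbr_value u c < cut c k \<longleftrightarrow> nbr_value u c' < cut c' k')"
  using sgn_inner_nbr_edge_eq_iff[OF assms(5)] cut_ne[OF assms(1,3) assms(5)]
    cut_ne[OF assms(2,4) assms(5)] assms(5) unfolding lift_def by simp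

lemma lift_adjacent:
  assumes "generic E n c" "k < card nbrs"
  shows "adjacent_signs E' n (lift c k) (lift c (Suc k))"
proof -
  obtain u0 where u0: "u0 \<in> nbrs" "\<not> nbr_value u0 c < cut c k" "nbr_value u0 c < cut c (Suc k)"
    and others: "\<And>u. u \<in> nbrs \<Longrightarrow> u \<noteq> u0 \<Longrightarrow>
                       nbr_value u c < cut c k \<longleftrightarrow> nbr_value u c < cut c (Suc k)"
    using cut_step[of nbrs "\<lambda>u. nbr_value u c" "cut c k" k "cut c (Suc k)"]
      card_below_cut[OF assms(1)] assms(2) by auto
  note sgn_iff = sgn_lift_eq_iff[OF assms(1) assms(1), of k "Suc k"]
  show ?thesis
    unfolding adjacent_signs_def same_signs_def
  proof (intro bexI conjI ballI)
    show "{v, u0} \<in> E'" using u0(1) new_edges_eq by blast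
    show "sgn (lift c k \<bullet> n {v, u0}) \<noteq> sgn (lift c (Suc k) \<bullet> n {v, u0})"
      using sgn_iff u0 assms(2) by simp
    fix e assume "e \<in> E' - {{v, u0}}"
    then consider "e \<in> E" | u where "u \<in> nbrs" "u \<noteq> u0" "e = {v, u}"
      unfolding new_edges_eq by blast
    then show "sgn (lift c k \<bullet> n e) = sgn (lift c (Suc k) \<bullet> n e)"
      by cases (use sgn_iff others assms(2) in \<open>simp_all add: lift_def\<close>)
  qed
qed

lemma lift_adjacent_base:
  assumes "generic E n c" "generic E n c'" "adjacent_signs E n c c'" "q = 0 \<or> q = card nbrs"
  shows "adjacent_signs E' n (lift c q) (lift c' q)"
proof -
  obtain e0 where e0: "e0 \<in> E" "sgn (c \<bullet> n e0) \<noteq> sgn (c' \<bullet> n e0)"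
    and same: "same_signs (E - {e0}) n c c'"
    using assms(3) unfolding adjacent_signs_def by blast
  have sides: "nbr_value u c < cut c q \<longleftrightarrow> nbr_value u c' < cut c' q" if "u \<in> nbrs" for u
    using assms(4) below_cut_0 below_cut_top assms(1,2) that by auto
  show ?thesis
    unfolding adjacent_signs_def same_signs_def
  proof (intro bexI conjI ballI)
    show "e0 \<in> E'" using e0(1) new_edges_eq by blast
    show "sgn (lift c q \<bullet> n e0) \<noteq> sgn (lift c' q \<bullet> n e0)"
      using e0 unfolding lift_def by simp
    fix e assume "e \<in> E' - {e0}"
    then consider "e \<in> E - {e0}" | u where "u \<in> nbrs" "e = {v, u}"
      unfolding new_edges_eq by blast
    then show "sgn (lift c q \<bullet> n e) = sgn (lift c' q \<bullet> n e)"
    proof cases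
      case 1
      then show ?thesis using same unfolding same_signs_def lift_def by simp
    next
      case 2
      then show ?thesis
        using sgn_lift_eq_iff[OF assms(1,2)] sides assms(4) by auto
    qed
  qed
qed

lemma same_signs_with_v_imp_same_signs:
  assumes "same_signs E' n (with_v c t) (with_v c' t')"
  shows "same_signs E n c c'"
  unfolding same_signs_def
proof
  fix e assume "e \<in> E"
  moreover from this have "sgn (with_v c t \<bullet> n e) = sgn (with_v c' t' \<bullet> n e)"
    using assms unfolding same_signs_def new_edges_eq by blast
  ultimately show "sgn (c \<bullet> n e) = sgn (c' \<bullet> n e)" by simp
qed

lemma same_signs_lift_imp_eq:
  assumes "generic E n c" "k \<le> card nbrs" "k' \<le> card nbrs"
    and "same_signs E' n (lift c k) (lift c k')"
  shows "k = k'"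
proof (rule ccontr)
  assume "k \<noteq> k'"
  then have "{u\<in>nbrs. nbr_value u c < cut c k} \<noteq> {u\<in>nbrs. nbr_value u c < cut c k'}"
    using card_below_cut[OF assms(1,2)] card_below_cut[OF assms(1,3)] by metis
  then obtain u where "u \<in> nbrs" "(nbr_value u c < cut c k) \<noteq> (nbr_value u c < cut c k')"
    by blast
  moreover have "{v, u} \<in> E'" using \<open>u \<in> nbrs\<close> new_edges_eq by blast
  ultimately show False
    using assms(4) sgn_lift_eq_iff[OF assms(1,1,2,3)] unfolding same_signs_def by blast
qed

lemma lift_cover:
  assumes "generic E' n a" "generic E n c" "same_signs E n a c"
  obtains k where "k \<le> card nbrs" "same_signs E' n a (lift c k)"
proof
  define k where "k = card {u\<in>nbrs. nbr_value u a < a $ v}"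
  show k: "k \<le> card nbrs" unfolding k_def by (rule card_mono) auto
  have generic_a: "generic E n a" "\<And>u. u \<in> nbrs \<Longrightarrow> nbr_value u a \<noteq> a $ v"
    using assms(1) inner_nbr_edge_nonzero_iff unfolding generic_def new_edges_eq by auto
  have sides: "{u\<in>nbrs. nbr_value u a < a $ v} = {u\<in>nbrs. nbr_value u c < cut c k}"
  proof (rule cut_sets_eq)
    show "nbr_value u a < nbr_value u' a \<longleftrightarrow> nbr_value u c < nbr_value u' c"
      if "u \<in> nbrs" "u' \<in> nbrs" for u u'
      using nbr_value_less_iff[OF generic_a(1) assms(2,3) that] .
  qed (use generic_a(2) cut_ne[OF assms(2) k] card_below_cut[OF assms(2) k] in \<open>auto simp: k_def\<close>)
  show "same_signs E' n a (lift c k)"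
    unfolding same_signs_def new_edges_eq
  proof (intro ballI, elim UnE imageE)
    show "sgn (a \<bullet> n e) = sgn (lift c k \<bullet> n e)" if "e \<in> E" for e
      using assms(3) that unfolding same_signs_def lift_def by simp
    show "sgn (a \<bullet> n e) = sgn (lift c k \<bullet> n e)" if "e = {v, u}" "u \<in> nbrs" for e u
      using that sides sgn_inner_nbr_edge_eq_iff[OF that(2) generic_a(2)[OF that(2)]]
        cut_ne[OF assms(2) k that(2)] unfolding lift_def by auto
  qed
qed

end

context simplicial_extension
begin

definition fiber_size :: nat where
  "fiber_size = Suc (card nbrs)"

text \<open>The new regions are visited fibre by fibre along the old cycle, alternately upwards and
  downwards, so that consecutive fibres are joined at their common extreme position
  \<open>0\<close> or \<open>card nbrs\<close>; closing the cycle this way needs an even number of fibres.\<close>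

definition fiber_position :: "nat \<Rightarrow> nat \<Rightarrow> nat" where
  "fiber_position j k = (if even j then k else card nbrs - k)"

definition snake :: "(real^'n) list \<Rightarrow> (real^'n) list" where
  "snake cs = map (\<lambda>i. lift (cs ! (i div fiber_size)) (fiber_position (i div fiber_size) (i mod fiber_size)))
                  [0..<length cs * fiber_size]"

lemma length_snake: "length (snake cs) = length cs * fiber_size"
  unfolding snake_def by simp

lemma index_less_length_snake:
  assumes "j < length cs" "k < fiber_size"
  shows "j * fiber_size + k < length (snake cs)"
proof -
  have "j * fiber_size + k < Suc j * fiber_size" using assms(2) by simp
  also have "\<dots> \<le> length (snake cs)"
    using assms(1) unfolding length_snake by (intro mult_right_mono) auto
  finally show ?thesis .
qed

lemma snake_nth:
  assumes "j < length cs" "k < fiber_size"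
  shows "snake cs ! (j * fiber_size + k) = lift (cs ! j) (fiber_position j k)"
proof -
  have "(j * fiber_size + k) div fiber_size = j" "(j * fiber_size + k) mod fiber_size = k"
    using assms(2) by simp_all
  then show ?thesis
    using index_less_length_snake[OF assms] unfolding snake_def length_snake by simp
qed

lemma snake_index:
  assumes "i < length (snake cs)"
  obtains j k where "j < length cs" "k < fiber_size" "i = j * fiber_size + k"
proof -
  have "0 < fiber_size" by (simp add: fiber_size_def)
  then have "i div fiber_size < length cs" "i mod fiber_size < fiber_size"
    using assms unfolding length_snake by (simp_all add: less_mult_imp_div_less)
  then show ?thesis using that[of "i div fiber_size" "i mod fiber_size"] by simp
qed

lemma fiber_position_le: "k < fiber_size \<Longrightarrow> fiber_position j k \<le> card nbrs"
  unfolding fiber_position_def fiber_size_def by simp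

lemma lift_adjacent_position:
  assumes "generic E n c" "k < card nbrs"
  shows "adjacent_signs E' n (lift c (fiber_position j k)) (lift c (fiber_position j (Suc k)))"
proof (cases "even j")
  case False
  have "card nbrs - k = Suc (card nbrs - Suc k)" using assms(2) by simp
  with False show ?thesis
    using adjacent_signs_sym[OF lift_adjacent[OF assms(1), of "card nbrs - Suc k"]] assms(2)
    unfolding fiber_position_def by simp
qed (use lift_adjacent[OF assms] in \<open>simp add: fiber_position_def\<close>)

lemma card_nbrs_le_one:
  assumes "E = {}"
  shows "card nbrs \<le> 1"
proof (rule ccontr)
  assume "\<not> card nbrs \<le> 1"
  then obtain u u' where "u \<in> nbrs" "u' \<in> nbrs" "u \<noteq> u'"
    using card_le_Suc0_iff_eq[of nbrs] by auto
  then obtain s :: real where "{u, u'} \<in> E" by (rule inner_nbr_pair_edge)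
  with assms show False by simp
qed

context
  fixes cs :: "(real^'n) list"
  assumes cycle: "region_cycle E n cs"
    and length: "card E < length cs"
    and parity: "length cs = 1 \<or> even (length cs)"
begin

lemma cycle_generic: "j < length cs \<Longrightarrow> generic E n (cs ! j)"
  using cycle unfolding region_cycle_def by simp

lemma snake_generic:
  assumes "x \<in> set (snake cs)"
  shows "generic E' n x"
proof -
  obtain i where "i < length (snake cs)" "x = snake cs ! i"
    using assms by (auto simp: in_set_conv_nth)
  then obtain j k where "j < length cs" "k < fiber_size" "x = snake cs ! (j * fiber_size + k)"
    using snake_index by metis
  then show ?thesis
    using snake_nth lift_generic cycle_generic fiber_position_le by simp
qed

lemma snake_covers:
  assumes "generic E' n a"
  shows "\<exists>x\<in>set (snake cs). same_signs E' n a x"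
proof -
  have "generic E n a" using assms unfolding generic_def new_edges_eq by simp
  then obtain j where j: "j < length cs" and "same_signs E n a (cs ! j)"
    using cycle unfolding region_cycle_def by (metis in_set_conv_nth)
  then obtain k0 where k0: "k0 \<le> card nbrs" "same_signs E' n a (lift (cs ! j) k0)"
    using lift_cover[OF assms cycle_generic] by blast
  define k where "k = (if even j then k0 else card nbrs - k0)"
  have "k < fiber_size" "fiber_position j k = k0"
    using k0(1) unfolding k_def fiber_position_def fiber_size_def by auto
  then have "snake cs ! (j * fiber_size + k) = lift (cs ! j) k0"
    using snake_nth[OF j] by simp
  moreover have "j * fiber_size + k < length (snake cs)"
    using index_less_length_snake[OF j \<open>k < fiber_size\<close>] .
  ultimately show ?thesis using k0(2) nth_mem by metis
qed

lemma snake_distinct: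
  assumes "i < length (snake cs)" "i' < length (snake cs)"
    and same: "same_signs E' n (snake cs ! i) (snake cs ! i')"
  shows "i = i'"
proof -
  obtain j k where j: "j < length cs" "k < fiber_size" "i = j * fiber_size + k"
    using snake_index assms(1) by metis
  obtain j' k' where j': "j' < length cs" "k' < fiber_size" "i' = j' * fiber_size + k'"
    using snake_index assms(2) by metis
  have "same_signs E n (cs ! j) (cs ! j')"
    using same snake_nth j j' same_signs_with_v_imp_same_signs unfolding lift_def by metis
  then have "j = j'" using cycle j(1) j'(1) unfolding region_cycle_def by blast
  then have "fiber_position j k = fiber_position j k'"
    using same snake_nth j j' same_signs_lift_imp_eq[OF cycle_generic[OF j(1)]]
    by (auto simp: fiber_position_def fiber_size_def)
  then have "k = k'" using j(2) j'(2) by (auto simp: fiber_position_def fiber_size_def split: if_splits)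
  with \<open>j = j'\<close> j j' show ?thesis by simp
qed

lemma snake_adjacent_next_fiber:
  assumes "Suc j < length cs"
  shows "adjacent_signs E' n (snake cs ! (j * fiber_size + card nbrs)) (snake cs ! (Suc j * fiber_size))"
proof -
  let ?q = "fiber_position j (card nbrs)"
  have "\<forall>i<length cs. adjacent_signs E n (cs ! i) (cs ! ((i + 1) mod length cs))"
    using cycle assms unfolding region_cycle_def by simp
  then have "adjacent_signs E n (cs ! j) (cs ! Suc j)"
    using assms by (metis Suc_eq_plus1 Suc_lessD mod_less)
  then have "adjacent_signs E' n (lift (cs ! j) ?q) (lift (cs ! Suc j) ?q)"
    using lift_adjacent_base cycle_generic assms by (auto simp: fiber_position_def)
  moreover have "fiber_position (Suc j) 0 = ?q" by (simp add: fiber_position_def)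
  ultimately show ?thesis
    using snake_nth[where j=j and k="card nbrs"] snake_nth[where j="Suc j" and k=0] assms by (simp add: fiber_size_def)
qed

lemma snake_adjacent_wrap:
  assumes "2 \<le> length (snake cs)"
  shows "adjacent_signs E' n (snake cs ! ((length cs - 1) * fiber_size + card nbrs)) (snake cs ! 0)"
proof -
  let ?j = "length cs - 1"
  have m: "0 < length cs" using assms length_snake by (metis gr0I mult_0 not_numeral_le_zero)
  have first: "snake cs ! 0 = lift (cs ! 0) 0"
    using snake_nth[where j=0 and k=0] m by (simp add: fiber_position_def fiber_size_def)
  show ?thesis
  proof (cases "length cs = 1")
    case True
    then have "card nbrs \<le> 1" using card_nbrs_le_one length by simp
    moreover have "2 \<le> fiber_size" using assms True by (simp add: length_snake)
    ultimately have "card nbrs = 1" by (simp add: fiber_size_def)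
    then show ?thesis
      using first snake_nth[OF m, of 1] True adjacent_signs_sym[OF lift_adjacent[OF cycle_generic[OF m], of 0]]
      by (simp add: fiber_position_def fiber_size_def)
  next
    case False
    then have "odd ?j" "2 \<le> length cs" using parity m by presburger+
    then have "\<forall>i<length cs. adjacent_signs E n (cs ! i) (cs ! ((i + 1) mod length cs))"
      using cycle unfolding region_cycle_def by simp
    moreover have j: "?j < length cs" "(?j + 1) mod length cs = 0" using m by simp_all
    ultimately have "adjacent_signs E n (cs ! ?j) (cs ! 0)" by metis
    then have "adjacent_signs E' n (lift (cs ! ?j) 0) (lift (cs ! 0) 0)"
      using lift_adjacent_base cycle_generic m by simp
    then show ?thesis
      using first snake_nth[OF j(1), of "card nbrs"] \<open>odd ?j\<close>
      by (simp add: fiber_position_def fiber_size_def)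
  qed
qed

lemma snake_adjacent:
  assumes "2 \<le> length (snake cs)" "i < length (snake cs)"
  shows "adjacent_signs E' n (snake cs ! i) (snake cs ! ((i + 1) mod length (snake cs)))"
proof -
  obtain j k where j: "j < length cs" and k: "k < fiber_size" and i: "i = j * fiber_size + k"
    using snake_index assms(2) by metis
  consider "k < card nbrs" | "k = card nbrs" "Suc j < length cs" | "k = card nbrs" "Suc j = length cs"
    using j k unfolding fiber_size_def by linarith
  then show ?thesis
  proof cases
    case 1
    then have "Suc k < fiber_size" by (simp add: fiber_size_def)
    then have "(i + 1) mod length (snake cs) = j * fiber_size + Suc k"
      using index_less_length_snake[OF j \<open>Suc k < fiber_size\<close>] i by simp
    then show ?thesis
      using 1 i snake_nth[OF j k] snake_nth[OF j \<open>Suc k < fiber_size\<close>]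
        lift_adjacent_position[OF cycle_generic[OF j]] by simp
  next
    case 2
    have "(i + 1) mod length (snake cs) = Suc j * fiber_size"
      using index_less_length_snake[OF 2(2), of 0] i 2(1) by (simp add: fiber_size_def)
    then show ?thesis using snake_adjacent_next_fiber[OF 2(2)] i 2(1) by simp
  next
    case 3
    have "i + 1 = Suc j * fiber_size" using i 3(1) by (simp add: fiber_size_def)
    with 3(2) have "(i + 1) mod length (snake cs) = 0" by (metis length_snake mod_self)
    moreover have "j = length cs - 1" using 3(2) by simp
    ultimately show ?thesis using snake_adjacent_wrap assms(1) 3(1) i by simp
  qed
qed

lemma snake_region_cycle:
  "region_cycle E' n (snake cs) \<and> card E' < length (snake cs) \<and>
   (length (snake cs) = 1 \<or> even (length (snake cs)))"
proof (intro conjI)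
  show "region_cycle E' n (snake cs)"
    unfolding region_cycle_def
    using snake_generic snake_covers snake_distinct snake_adjacent by blast
  have "card E' = card E + card nbrs" by (rule card_new_edges)
  also have "\<dots> < length cs + length cs * card nbrs" using length by (simp add: add_less_le_mono)
  finally show "card E' < length (snake cs)" by (simp add: length_snake fiber_size_def)
  show "length (snake cs) = 1 \<or> even (length (snake cs))"
  proof (cases "length cs = 1")
    case True
    then have "card nbrs \<le> 1" using card_nbrs_le_one length by simp
    with True show ?thesis by (auto simp: length_snake fiber_size_def le_Suc_eq)
  qed (use parity in \<open>simp add: length_snake\<close>)
qed

end

end

lemma induced_edges_empty:
  assumes "signed_graph Ep En"
  shows "induced_edges Ep En {} = {}"
proof -
  have "e \<noteq> {}" if "e \<in> Ep \<union> En" for e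
    using signed_graph_edgeD[OF assms that] by auto
  then show ?thesis unfolding induced_edges_def by auto
qed

lemma region_cycle_induced_edges:
  assumes "signed_graph Ep En" "distinct ws"
    and "\<forall>i<length ws. signed_simplicial_in Ep En (set (drop i ws)) (ws ! i)"
  shows "\<exists>cs. region_cycle (induced_edges Ep En (set ws)) (edge_normal Ep) cs \<and>
           card (induced_edges Ep En (set ws)) < length cs \<and> (length cs = 1 \<or> even (length cs))"
  using assms(2,3)
proof (induction ws)
  case Nil
  have "region_cycle {} (edge_normal Ep) [0]"
    unfolding region_cycle_def generic_def same_signs_def by simp
  then show ?case using induced_edges_empty[OF assms(1)] by fastforce
next
  case (Cons w ws)
  interpret simplicial_extension Ep En w "set ws"
    using assms(1) Cons.prems spec[OF Cons.prems(2), of 0] by unfold_locales auto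
  have "\<forall>i<length ws. signed_simplicial_in Ep En (set (drop i ws)) (ws ! i)"
    using Cons.prems(2) by (metis Suc_less_eq drop_Suc_Cons length_Cons nth_Cons_Suc)
  then obtain cs where "region_cycle (induced_edges Ep En (set ws)) (edge_normal Ep) cs"
    "card (induced_edges Ep En (set ws)) < length cs" "length cs = 1 \<or> even (length cs)"
    using Cons by auto
  then show ?case using snake_region_cycle by auto
qed

theorem corollary1p3:
  fixes Ep En :: "'n::finite set set"
  assumes "signed_graph Ep En"
    and "card (Ep \<union> En) \<ge> 2"
    and "\<exists>vs. signed_peo Ep En vs"
  shows "\<exists>cs. hamiltonian_cycle (skel_vertices (signed_graphic_zonotope Ep En))
                (skel_adj (signed_graphic_zonotope Ep En)) cs"
proof -
  obtain vs where "distinct vs" "set vs = UNIV"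
    "\<forall>i<length vs. signed_simplicial_in Ep En (set (drop i vs)) (vs ! i)"
    using assms(3) unfolding signed_peo_def by blast
  moreover have "induced_edges Ep En UNIV = Ep \<union> En" unfolding induced_edges_def by auto
  ultimately obtain cs where cycle: "region_cycle (Ep \<union> En) (edge_normal Ep) cs"
    and "card (Ep \<union> En) < length cs"
    using region_cycle_induced_edges[OF assms(1)] by metis
  then have "3 \<le> length cs" using assms(2) by simp
  moreover have "\<forall>e\<in>Ep \<union> En. edge_normal Ep e \<noteq> 0"
    using edge_normal_nonzero[OF assms(1)] by blast
  ultimately show ?thesis
    using hamiltonian_cycle_zonotope[OF _ cycle] signed_graphic_zonotope_eq[OF assms(1)] by auto
qed

end
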